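(* Let $k,c\geq 0$ be integers. If $G$ is a $k$-gap-planar graph and a subgraph $G'$ of $G$ is a $(\leq c)$-subdivision of some graph $H$, then $H$ is $(c+1)k$-gap-planar.
   Context: All graphs are simple, finite and undirected. A drawing of a graph $G$ in the plane represents each vertex by a distinct point and each edge $vw$ by a non-self-intersecting curve between the points of $v$ and $w$, such that no three edges cross at a single point. A drawing is $k$-gap-planar if every crossing can be charged to one of the two edges involved so that at most $k$ crossings are charged to each edge; a graph is $k$-gap-planar if it has a $k$-gap-planar drawing in the plane. A $(\leq c)$-subdivision of a graph $H$ is obtained by replacing each edge of $H$ by a path with at most $c$ new internal vertices, the paths being internally disjoint. *)

theory Defs
  imports "HOL-Analysis.Analysis"
begin

definition graph :: "'v set \<Rightarrow> 'v set set \<Rightarrow> bool" where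
  "graph V E \<longleftrightarrow> finite V \<and> (\<forall>e\<in>E. \<exists>u v. e = {u, v} \<and> u \<noteq> v \<and> u \<in> V \<and> v \<in> V)"

definition subgraph :: "'v set \<Rightarrow> 'v set set \<Rightarrow> 'v set \<Rightarrow> 'v set set \<Rightarrow> bool" where
  "subgraph V' E' V E \<longleftrightarrow> graph V' E' \<and> V' \<subseteq> V \<and> E' \<subseteq> E"

text \<open>The plane is modelled as the complex numbers; curves are arcs (injective paths on [0,1]).\<close>
definition interior_pts :: "(real \<Rightarrow> complex) \<Rightarrow> complex set" where
  "interior_pts g = path_image g - {pathstart g, pathfinish g}"

definition crossings :: "'v set set \<Rightarrow> ('v set \<Rightarrow> real \<Rightarrow> complex) \<Rightarrow> ('v set set \<times> complex) set" where
  "crossings E curve =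
     {({e, f}, p) | e f p. e \<in> E \<and> f \<in> E \<and> e \<noteq> f \<and>
                          p \<in> interior_pts (curve e) \<and> p \<in> interior_pts (curve f)}"

definition drawing :: "'v set \<Rightarrow> 'v set set \<Rightarrow> ('v \<Rightarrow> complex) \<Rightarrow> ('v set \<Rightarrow> real \<Rightarrow> complex) \<Rightarrow> bool" where
  "drawing V E pos curve \<longleftrightarrow>
     inj_on pos V \<and>
     (\<forall>e\<in>E. arc (curve e) \<and>
             {pathstart (curve e), pathfinish (curve e)} = pos ` e \<and>
             path_image (curve e) \<inter> pos ` V = pos ` e) \<and>
     finite (crossings E curve) \<and>
     (\<forall>p. card {e \<in> E. p \<in> interior_pts (curve e)} \<le> 2)"

definition gap_planar_drawing ::
  "nat \<Rightarrow> 'v set \<Rightarrow> 'v set set \<Rightarrow> ('v \<Rightarrow> complex) \<Rightarrow> ('v set \<Rightarrow> real \<Rightarrow> complex) \<Rightarrow> bool" where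
  "gap_planar_drawing k V E pos curve \<longleftrightarrow>
     drawing V E pos curve \<and>
     (\<exists>ch. (\<forall>x\<in>crossings E curve. ch x \<in> fst x) \<and>
           (\<forall>e\<in>E. card {x \<in> crossings E curve. ch x = e} \<le> k))"

definition k_gap_planar :: "nat \<Rightarrow> 'v set \<Rightarrow> 'v set set \<Rightarrow> bool" where
  "k_gap_planar k V E \<longleftrightarrow> (\<exists>pos curve. gap_planar_drawing k V E pos curve)"

definition path_edges :: "'v list \<Rightarrow> 'v set set" where
  "path_edges xs = {{xs ! i, xs ! Suc i} | i. Suc i < length xs}"

definition inner_vertices :: "'v list \<Rightarrow> 'v set" where
  "inner_vertices xs = set (butlast (tl xs))"

definition subdivision_le :: "nat \<Rightarrow> 'v set \<Rightarrow> 'v set set \<Rightarrow> 'w set \<Rightarrow> 'w set set \<Rightarrow> bool" where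
  "subdivision_le c V' E' VH EH \<longleftrightarrow>
     (\<exists>(\<phi> :: 'w \<Rightarrow> 'v) (P :: 'w set \<Rightarrow> 'v list).
        inj_on \<phi> VH \<and>
        (\<forall>e\<in>EH. distinct (P e) \<and> 2 \<le> length (P e) \<and> length (P e) \<le> c + 2 \<and>
                 {hd (P e), last (P e)} = \<phi> ` e \<and>
                 inner_vertices (P e) \<inter> \<phi> ` VH = {}) \<and>
        (\<forall>e\<in>EH. \<forall>f\<in>EH. e \<noteq> f \<longrightarrow> inner_vertices (P e) \<inter> inner_vertices (P f) = {}) \<and>
        V' = \<phi> ` VH \<union> (\<Union>e\<in>EH. inner_vertices (P e)) \<and>
        E' = (\<Union>e\<in>EH. path_edges (P e)))"

end

theory Submission
  imports Defs
begin

text \<open>Each edge \<open>e\<close> of \<open>H\<close> is drawn along its subdivision path \<open>P e\<close>: concatenating the curves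
  of the at most \<open>c + 1\<close> edges of \<open>P e\<close> and extracting an arc gives a curve between the images of
  the branch vertices of \<open>e\<close>. Since different paths share no inner vertex, two such curves can
  only meet in interior points of edges of \<open>G\<close>, so a crossing of the new drawing at a point \<open>p\<close>
  is a crossing of the old drawing at \<open>p\<close>, between an edge of each of the two paths. Charging the
  new crossing to the edge of \<open>H\<close> whose path contains the charged edge of the old crossing, each
  edge of \<open>H\<close> receives at most \<open>k\<close> crossings per edge of its path, hence at most \<open>(c + 1) k\<close>.\<close>

lemma path_edges_eq_image: "path_edges xs = (\<lambda>i. {xs ! i, xs ! Suc i}) ` {..< length xs - 1}"
  unfolding path_edges_def by auto

lemma finite_path_edges: "finite (path_edges xs)"
  by (simp add: path_edges_eq_image)

lemma card_path_edges_le: "card (path_edges xs) \<le> length xs - 1"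
  unfolding path_edges_eq_image by (metis card_image_le card_lessThan finite_lessThan)

lemma path_edges_Cons:
  assumes "xs \<noteq> []"
  shows "path_edges (x # xs) = insert {x, hd xs} (path_edges xs)"
proof -
  obtain n where "length xs = Suc n" using assms by (cases xs) auto
  then show ?thesis
    using assms by (simp add: path_edges_eq_image lessThan_Suc_eq_insert_0 image_image hd_conv_nth)
qed

lemma path_edges_subset_set: "g \<in> path_edges xs \<Longrightarrow> g \<subseteq> set xs"
  unfolding path_edges_def by auto

lemma doubleton_of_path_edge:
  assumes "distinct xs" and "g \<in> path_edges xs"
  obtains x y where "g = {x, y}" and "x \<noteq> y"
proof -
  obtain i where "g = {xs ! i, xs ! Suc i}" and "Suc i < length xs"
    using assms(2) unfolding path_edges_def by auto
  with assms(1) show ?thesis by (intro that) (auto simp: nth_eq_iff_index_eq)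
qed

lemma set_eq_hd_last_inner_vertices:
  assumes "2 \<le> length xs"
  shows "set xs = {hd xs, last xs} \<union> inner_vertices xs"
proof -
  obtain a ys where "xs = a # ys" and "ys \<noteq> []"
    using assms by (cases xs) fastforce+
  then obtain zs b where "xs = a # zs @ [b]"
    by (metis rev_exhaust)
  then show ?thesis by (auto simp: inner_vertices_def)
qed

lemma hd_neq_last_if_distinct: "distinct xs \<Longrightarrow> 2 \<le> length xs \<Longrightarrow> hd xs \<noteq> last xs"
  by (cases xs) auto

lemma orient_path:
  assumes "path a" and "{pathstart a, pathfinish a} = {u, v}"
  obtains b where "path b" "pathstart b = u" "pathfinish b = v" "path_image b = path_image a"
proof (cases "pathstart a = u")
  case True
  then show ?thesis using assms that by (auto simp: doubleton_eq_iff)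
next
  case False
  then show ?thesis
    using assms that[of "reversepath a"] by (auto simp: doubleton_eq_iff)
qed

lemma path_along_path_edges:
  fixes pos :: "'v \<Rightarrow> 'a::real_normed_vector"
  assumes "xs \<noteq> []"
    and "\<And>g. g \<in> path_edges xs \<Longrightarrow> path (curve g) \<and> {pathstart (curve g), pathfinish (curve g)} = pos ` g"
  shows "\<exists>\<gamma>. path \<gamma> \<and> pathstart \<gamma> = pos (hd xs) \<and> pathfinish \<gamma> = pos (last xs) \<and>
           path_image \<gamma> \<subseteq> pos ` set xs \<union> (\<Union>g\<in>path_edges xs. path_image (curve g))"
  using assms
proof (induction xs)
  case Nil
  then show ?case by simp
next
  case (Cons x xs)
  show ?case
  proof (cases "xs = []")
    case True
    then show ?thesis by (intro exI[of _ "\<lambda>_. pos x"]) (auto simp: path_const pathstart_def pathfinish_def)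
  next
    case False
    have edges: "path_edges (x # xs) = insert {x, hd xs} (path_edges xs)"
      using False by (rule path_edges_Cons)
    obtain \<gamma> where \<gamma>: "path \<gamma>" "pathstart \<gamma> = pos (hd xs)" "pathfinish \<gamma> = pos (last xs)"
      "path_image \<gamma> \<subseteq> pos ` set xs \<union> (\<Union>g\<in>path_edges xs. path_image (curve g))"
      using Cons False edges by auto
    obtain \<beta> where \<beta>: "path \<beta>" "pathstart \<beta> = pos x" "pathfinish \<beta> = pos (hd xs)"
      "path_image \<beta> = path_image (curve {x, hd xs})"
      using orient_path[of "curve {x, hd xs}" "pos x" "pos (hd xs)"] Cons.prems(2) edges by auto
    show ?thesis
      using \<beta> \<gamma> False edges by (intro exI[of _ "\<beta> +++ \<gamma>"]) (auto simp: path_image_join)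
  qed
qed

lemma arc_along_path_edges:
  fixes pos :: "'v \<Rightarrow> 'a::{complete_space,real_normed_vector}"
  assumes "xs \<noteq> []" and "pos (hd xs) \<noteq> pos (last xs)"
    and "\<And>g. g \<in> path_edges xs \<Longrightarrow> path (curve g) \<and> {pathstart (curve g), pathfinish (curve g)} = pos ` g"
  shows "\<exists>\<gamma>. arc \<gamma> \<and> pathstart \<gamma> = pos (hd xs) \<and> pathfinish \<gamma> = pos (last xs) \<and>
           path_image \<gamma> \<subseteq> pos ` set xs \<union> (\<Union>g\<in>path_edges xs. path_image (curve g))"
proof -
  obtain \<gamma> where \<gamma>: "path \<gamma>" "pathstart \<gamma> = pos (hd xs)" "pathfinish \<gamma> = pos (last xs)"
    "path_image \<gamma> \<subseteq> pos ` set xs \<union> (\<Union>g\<in>path_edges xs. path_image (curve g))"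
    using path_along_path_edges[OF assms(1,3)] by blast
  then show ?thesis
    using path_contains_arc[OF \<gamma>(1-3) assms(2)] by (metis order_trans)
qed

lemma graph_finite_edges:
  assumes "graph V E"
  shows "finite E"
proof -
  have "E \<subseteq> Pow V" and "finite V" using assms unfolding graph_def by auto
  then show ?thesis by (meson finite_Pow_iff finite_subset)
qed

lemma crossings_iff:
  "(F, p) \<in> crossings E curve \<longleftrightarrow>
     (\<exists>e f. F = {e, f} \<and> e \<in> E \<and> f \<in> E \<and> e \<noteq> f \<and>
            p \<in> interior_pts (curve e) \<and> p \<in> interior_pts (curve f))"
  unfolding crossings_def by blast

lemma crossing_eq_edges_through:
  assumes "finite E" and "card {g \<in> E. p \<in> interior_pts (curve g)} \<le> 2"
    and "(F, p) \<in> crossings E curve"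
  shows "F = {g \<in> E. p \<in> interior_pts (curve g)}"
proof -
  obtain e f where "F = {e, f}" "e \<noteq> f" "F \<subseteq> {g \<in> E. p \<in> interior_pts (curve g)}"
    using assms(3) unfolding crossings_iff by auto
  with assms(1,2) show ?thesis by (intro card_seteq) auto
qed

lemma inj_on_snd_crossings:
  assumes "finite E" and "\<And>p. card {g \<in> E. p \<in> interior_pts (curve g)} \<le> 2"
  shows "inj_on snd (crossings E curve)"
proof (rule inj_onI)
  fix x y assume x: "x \<in> crossings E curve" and y: "y \<in> crossings E curve" and "snd x = snd y"
  have "fst x = {g \<in> E. snd x \<in> interior_pts (curve g)}"
    using crossing_eq_edges_through[OF assms(1,2), of "fst x" "snd x"] x by simp
  moreover have "fst y = {g \<in> E. snd y \<in> interior_pts (curve g)}"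
    using crossing_eq_edges_through[OF assms(1,2), of "fst y" "snd y"] y by simp
  ultimately have "fst x = fst y"
    using \<open>snd x = snd y\<close> by simp
  with \<open>snd x = snd y\<close> show "x = y" by (simp add: prod_eq_iff)
qed

lemma interior_pts_if_not_vertex:
  assumes "drawing V E pos curve" and "g \<in> E"
    and "p \<in> path_image (curve g)" and "p \<notin> pos ` V"
  shows "p \<in> interior_pts (curve g)"
proof -
  have "{pathstart (curve g), pathfinish (curve g)} = path_image (curve g) \<inter> pos ` V"
    using assms(1,2) unfolding drawing_def by auto
  then show ?thesis
    using assms(3,4) unfolding interior_pts_def by auto
qed

lemma doubleton_subset_eq: "{x, y} \<subseteq> {a, b} \<Longrightarrow> x \<noteq> y \<Longrightarrow> {x, y} = {a, b}"
  by blast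

locale subdivision =
  fixes VH :: "'w set" and EH :: "'w set set"
    and branch :: "'w \<Rightarrow> 'v" and P :: "'w set \<Rightarrow> 'v list" and c :: nat
  assumes graph_H: "graph VH EH"
    and inj_branch: "inj_on branch VH"
    and distinct_path: "e \<in> EH \<Longrightarrow> distinct (P e)"
    and length_path: "e \<in> EH \<Longrightarrow> 2 \<le> length (P e) \<and> length (P e) \<le> c + 2"
    and ends_path: "e \<in> EH \<Longrightarrow> {hd (P e), last (P e)} = branch ` e"
    and inner_vertices_not_branch: "e \<in> EH \<Longrightarrow> inner_vertices (P e) \<inter> branch ` VH = {}"
    and inner_vertices_disjoint:
      "e \<in> EH \<Longrightarrow> f \<in> EH \<Longrightarrow> e \<noteq> f \<Longrightarrow> inner_vertices (P e) \<inter> inner_vertices (P f) = {}"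
begin

lemma edge_subset_VH: "e \<in> EH \<Longrightarrow> e \<subseteq> VH"
  using graph_H unfolding graph_def by auto

lemma finite_EH: "finite EH"
  using graph_H by (rule graph_finite_edges)

lemma set_path: "e \<in> EH \<Longrightarrow> set (P e) = branch ` e \<union> inner_vertices (P e)"
  using set_eq_hd_last_inner_vertices[of "P e"] length_path[of e] ends_path[of e] by simp

lemma hd_neq_last_path: "e \<in> EH \<Longrightarrow> hd (P e) \<noteq> last (P e)"
  using hd_neq_last_if_distinct[of "P e"] distinct_path[of e] length_path[of e] by simp

lemma card_path_edges_path: "e \<in> EH \<Longrightarrow> card (path_edges (P e)) \<le> c + 1"
  using card_path_edges_le[of "P e"] length_path[of e] by linarith

lemma shared_vertex_is_branch:
  assumes "e \<in> EH" "f \<in> EH" "e \<noteq> f" "x \<in> set (P e)" "x \<in> set (P f)"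
  shows "x \<in> branch ` e"
proof (rule ccontr)
  assume "x \<notin> branch ` e"
  then have "x \<in> inner_vertices (P e)" using set_path assms(1,4) by blast
  moreover have "x \<in> branch ` VH \<union> inner_vertices (P f)"
    using set_path[OF assms(2)] edge_subset_VH[OF assms(2)] assms(5) by blast
  ultimately show False
    using inner_vertices_not_branch[OF assms(1)] inner_vertices_disjoint[OF assms(1-3)] by blast
qed

lemma path_edges_disjoint:
  assumes "e \<in> EH" "f \<in> EH" "e \<noteq> f"
  shows "path_edges (P e) \<inter> path_edges (P f) = {}"
proof (rule ccontr)
  assume "path_edges (P e) \<inter> path_edges (P f) \<noteq> {}"
  then obtain g where g: "g \<in> path_edges (P e)" "g \<in> path_edges (P f)" by blast
  obtain x y where xy: "g = {x, y}" "x \<noteq> y"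
    using doubleton_of_path_edge[OF distinct_path[OF assms(1)] g(1)] by blast
  have "x \<in> set (P e)" "y \<in> set (P e)" "x \<in> set (P f)" "y \<in> set (P f)"
    using path_edges_subset_set[OF g(1)] path_edges_subset_set[OF g(2)] xy(1) by auto
  then have "{x, y} \<subseteq> branch ` e" "{x, y} \<subseteq> branch ` f"
    using shared_vertex_is_branch[OF assms] shared_vertex_is_branch[OF assms(2,1) assms(3)[symmetric]]
    by auto
  then have "branch ` e = branch ` f"
    using ends_path[OF assms(1)] ends_path[OF assms(2)] xy(2) by (metis doubleton_subset_eq)
  then have "e = f"
    using inj_on_image_eq_iff[OF inj_branch edge_subset_VH[OF assms(1)] edge_subset_VH[OF assms(2)]]
    by blast
  with assms(3) show False ..
qed

end

lemma subdivision_leE: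
  fixes VH :: "'w set" and V' :: "'v set"
  assumes "subdivision_le c V' E' VH EH" and "graph VH EH"
  obtains branch P where "subdivision VH EH branch P c"
    and "V' = branch ` VH \<union> (\<Union>e\<in>EH. inner_vertices (P e))"
    and "E' = (\<Union>e\<in>EH. path_edges (P e))"
proof -
  from assms(1) obtain branch :: "'w \<Rightarrow> 'v" and P where sub: "inj_on branch VH"
    "\<forall>e\<in>EH. distinct (P e) \<and> 2 \<le> length (P e) \<and> length (P e) \<le> c + 2 \<and>
       {hd (P e), last (P e)} = branch ` e \<and> inner_vertices (P e) \<inter> branch ` VH = {}"
    "\<forall>e\<in>EH. \<forall>f\<in>EH. e \<noteq> f \<longrightarrow> inner_vertices (P e) \<inter> inner_vertices (P f) = {}"
    and "V' = branch ` VH \<union> (\<Union>e\<in>EH. inner_vertices (P e))"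
    and "E' = (\<Union>e\<in>EH. path_edges (P e))"
    unfolding subdivision_le_def by blast
  moreover have "subdivision VH EH branch P c"
    using assms(2) sub by (simp add: subdivision_def)
  ultimately show ?thesis
    using that by blast
qed

locale subdivision_drawing = subdivision VH EH branch P c
  for VH :: "'w set" and EH and branch :: "'w \<Rightarrow> 'v" and P and c +
  fixes V :: "'v set" and E :: "'v set set"
    and pos :: "'v \<Rightarrow> complex" and curve :: "'v set \<Rightarrow> real \<Rightarrow> complex"
  assumes drawing: "drawing V E pos curve"
    and finite_E: "finite E" \<comment> \<open>otherwise the bound \<open>card \<dots> \<le> 2\<close> of \<open>drawing\<close> is vacuous\<close>
    and vertices_subset: "branch ` VH \<union> (\<Union>e\<in>EH. inner_vertices (P e)) \<subseteq> V"
    and edges_subset: "(\<Union>e\<in>EH. path_edges (P e)) \<subseteq> E"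
begin

lemma branch_subset: "branch ` VH \<subseteq> V"
  using vertices_subset by blast

lemma set_path_subset: "e \<in> EH \<Longrightarrow> set (P e) \<subseteq> V"
  using set_path edge_subset_VH vertices_subset by blast

lemma path_edges_subset: "e \<in> EH \<Longrightarrow> path_edges (P e) \<subseteq> E"
  using edges_subset by blast

lemma finite_crossings: "finite (crossings E curve)"
  using drawing unfolding drawing_def by blast

lemma inj_on_pos: "inj_on pos V"
  using drawing unfolding drawing_def by blast

lemma edge_curve:
  assumes "g \<in> E"
  shows "arc (curve g)" and "{pathstart (curve g), pathfinish (curve g)} = pos ` g"
    and "path_image (curve g) \<inter> pos ` V = pos ` g"
  using drawing assms unfolding drawing_def by auto

lemma card_edges_through_le: "card {g \<in> E. p \<in> interior_pts (curve g)} \<le> 2"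
  using drawing unfolding drawing_def by blast

definition path_curve :: "'w set \<Rightarrow> real \<Rightarrow> complex" where
  "path_curve e = (SOME \<gamma>. arc \<gamma> \<and> pathstart \<gamma> = pos (hd (P e)) \<and> pathfinish \<gamma> = pos (last (P e)) \<and>
     path_image \<gamma> \<subseteq> pos ` set (P e) \<union> (\<Union>g\<in>path_edges (P e). path_image (curve g)))"

lemma path_curve:
  assumes "e \<in> EH"
  shows "arc (path_curve e) \<and> pathstart (path_curve e) = pos (hd (P e)) \<and>
    pathfinish (path_curve e) = pos (last (P e)) \<and>
    path_image (path_curve e) \<subseteq> pos ` set (P e) \<union> (\<Union>g\<in>path_edges (P e). path_image (curve g))"
proof -
  have "P e \<noteq> []"
    using length_path[OF assms] by auto
  have "pos (hd (P e)) \<noteq> pos (last (P e))"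
  proof
    assume "pos (hd (P e)) = pos (last (P e))"
    moreover have "hd (P e) \<in> V" "last (P e) \<in> V"
      using \<open>P e \<noteq> []\<close> set_path_subset[OF assms] by auto
    ultimately have "hd (P e) = last (P e)"
      using inj_on_pos by (simp add: inj_on_eq_iff)
    with hd_neq_last_path[OF assms] show False ..
  qed
  moreover have "path (curve g) \<and> {pathstart (curve g), pathfinish (curve g)} = pos ` g"
    if "g \<in> path_edges (P e)" for g
    using edge_curve(1,2)[of g] arc_imp_path path_edges_subset[OF assms] that by blast
  ultimately show ?thesis
    unfolding path_curve_def by (rule someI_ex[OF arc_along_path_edges[OF \<open>P e \<noteq> []\<close>]])
qed

lemma ends_path_curve:
  assumes "e \<in> EH"
  shows "{pathstart (path_curve e), pathfinish (path_curve e)} = (pos \<circ> branch) ` e"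
proof -
  have "{pathstart (path_curve e), pathfinish (path_curve e)} = pos ` {hd (P e), last (P e)}"
    using path_curve[OF assms] by simp
  then show ?thesis
    using ends_path[OF assms] by (simp add: image_comp)
qed

lemma path_curve_vertex:
  assumes "e \<in> EH" "p \<in> path_image (path_curve e)" "p \<in> pos ` V"
  shows "p \<in> pos ` set (P e)"
proof -
  consider "p \<in> pos ` set (P e)" | g where "g \<in> path_edges (P e)" "p \<in> path_image (curve g)"
    using path_curve[OF assms(1)] assms(2) by blast
  then show ?thesis
  proof cases
    case 1
    then show ?thesis .
  next
    case 2
    then have "p \<in> pos ` g"
      using edge_curve(3) path_edges_subset[OF assms(1)] assms(3) by blast
    then show ?thesis
      using path_edges_subset_set[OF 2(1)] by blast
  qed
qed

lemma path_curve_non_vertex: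
  assumes "e \<in> EH" "p \<in> path_image (path_curve e)" "p \<notin> pos ` V"
  obtains g where "g \<in> path_edges (P e)" "p \<in> interior_pts (curve g)"
proof -
  have "p \<notin> pos ` set (P e)"
    using assms(3) set_path_subset[OF assms(1)] by blast
  then obtain g where g: "g \<in> path_edges (P e)" "p \<in> path_image (curve g)"
    using path_curve[OF assms(1)] assms(2) by blast
  then have "p \<in> interior_pts (curve g)"
    using interior_pts_if_not_vertex[OF drawing _ _ assms(3)] path_edges_subset[OF assms(1)] by blast
  with g(1) show ?thesis by (rule that)
qed

lemma path_curves_meet_off_vertices:
  assumes "e \<in> EH" "f \<in> EH" "e \<noteq> f"
    and "p \<in> interior_pts (path_curve e)" "p \<in> path_image (path_curve f)"
  shows "p \<notin> pos ` V"
proof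
  assume "p \<in> pos ` V"
  moreover have "p \<in> path_image (path_curve e)"
    using assms(4) unfolding interior_pts_def by blast
  ultimately obtain x y where x: "x \<in> set (P e)" "p = pos x" and y: "y \<in> set (P f)" "p = pos y"
    using path_curve_vertex assms(1,2,5) by blast
  have "x \<in> V" "y \<in> V"
    using x(1) y(1) set_path_subset[OF assms(1)] set_path_subset[OF assms(2)] by blast+
  then have "x = y"
    using inj_onD[OF inj_on_pos, of x y] x(2) y(2) by simp
  then have "x \<in> {hd (P e), last (P e)}"
    using shared_vertex_is_branch[OF assms(1-3) x(1)] y(1) ends_path[OF assms(1)] by simp
  then have "p \<in> {pathstart (path_curve e), pathfinish (path_curve e)}"
    using path_curve[OF assms(1)] x(2) by auto
  with assms(4) show False
    unfolding interior_pts_def by blast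
qed

lemma path_image_path_curve_inter_branch:
  assumes "e \<in> EH"
  shows "path_image (path_curve e) \<inter> (pos \<circ> branch) ` VH = (pos \<circ> branch) ` e"
proof
  show "path_image (path_curve e) \<inter> (pos \<circ> branch) ` VH \<subseteq> (pos \<circ> branch) ` e"
  proof
    fix p assume p: "p \<in> path_image (path_curve e) \<inter> (pos \<circ> branch) ` VH"
    then obtain w where w: "w \<in> VH" "p = pos (branch w)" by auto
    then have "p \<in> pos ` V" using branch_subset by blast
    then obtain x where x: "x \<in> set (P e)" "p = pos x"
      using path_curve_vertex[OF assms] p by blast
    have "x \<in> V" "branch w \<in> V"
      using x(1) set_path_subset[OF assms] w(1) branch_subset by auto
    then have "x = branch w"
      using inj_onD[OF inj_on_pos, of x "branch w"] x(2) w(2) by simp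
    then have "x \<notin> inner_vertices (P e)"
      using inner_vertices_not_branch[OF assms] w(1) by blast
    then have "x \<in> branch ` e"
      using set_path[OF assms] x(1) by blast
    then show "p \<in> (pos \<circ> branch) ` e" using x(2) by auto
  qed
  have "(pos \<circ> branch) ` e \<subseteq> path_image (path_curve e)"
    unfolding ends_path_curve[OF assms, symmetric]
    by (simp add: pathstart_in_path_image pathfinish_in_path_image)
  moreover have "(pos \<circ> branch) ` e \<subseteq> (pos \<circ> branch) ` VH"
    using edge_subset_VH[OF assms] by (rule image_mono)
  ultimately show "(pos \<circ> branch) ` e \<subseteq> path_image (path_curve e) \<inter> (pos \<circ> branch) ` VH"
    by blast
qed

lemma card_path_curves_through_le: "card {e \<in> EH. p \<in> interior_pts (path_curve e)} \<le> 2"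
proof -
  define A where "A = {e \<in> EH. p \<in> interior_pts (path_curve e)}"
  have "finite A" using finite_EH unfolding A_def by simp
  show ?thesis
  proof (cases "\<exists>a\<in>A. \<exists>b\<in>A. a \<noteq> b")
    case False
    then have "card A \<le> 1" using card_le_Suc0_iff_eq[OF \<open>finite A\<close>] by auto
    then show ?thesis unfolding A_def by simp
  next
    case True
    txt \<open>Then \<open>p\<close> is no vertex, so each curve through \<open>p\<close> passes it inside its own edge of \<open>G\<close>.\<close>
    then obtain a b where ab: "a \<in> EH" "b \<in> EH" "a \<noteq> b"
      and p: "p \<in> interior_pts (path_curve a)" "p \<in> interior_pts (path_curve b)"
      unfolding A_def by blast
    have "p \<in> path_image (path_curve b)"
      using p(2) unfolding interior_pts_def by blast
    then have "p \<notin> pos ` V"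
      by (rule path_curves_meet_off_vertices[OF ab p(1)])
    have "\<forall>e\<in>A. \<exists>g. g \<in> path_edges (P e) \<and> p \<in> interior_pts (curve g)"
    proof
      fix e assume "e \<in> A"
      then have "e \<in> EH" "p \<in> path_image (path_curve e)"
        unfolding A_def interior_pts_def by auto
      then obtain g where "g \<in> path_edges (P e)" "p \<in> interior_pts (curve g)"
        using path_curve_non_vertex \<open>p \<notin> pos ` V\<close> by blast
      then show "\<exists>g. g \<in> path_edges (P e) \<and> p \<in> interior_pts (curve g)" by blast
    qed
    from bchoice[OF this] obtain edge
      where edge: "\<And>e. e \<in> A \<Longrightarrow> edge e \<in> path_edges (P e) \<and> p \<in> interior_pts (curve (edge e))"
      by blast
    have "inj_on edge A"
    proof (rule inj_onI, rule ccontr)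
      fix a b assume "a \<in> A" "b \<in> A" "edge a = edge b" "a \<noteq> b"
      then have "path_edges (P a) \<inter> path_edges (P b) = {}"
        using path_edges_disjoint unfolding A_def by simp
      moreover have "edge a \<in> path_edges (P a)" "edge b \<in> path_edges (P b)"
        using edge[OF \<open>a \<in> A\<close>] edge[OF \<open>b \<in> A\<close>] by blast+
      ultimately show False
        using \<open>edge a = edge b\<close> by (metis disjoint_iff)
    qed
    moreover have "edge ` A \<subseteq> {g \<in> E. p \<in> interior_pts (curve g)}"
      using edge path_edges_subset unfolding A_def by auto
    ultimately have "card A \<le> card {g \<in> E. p \<in> interior_pts (curve g)}"
      using finite_E by (intro card_inj_on_le) auto
    also have "\<dots> \<le> 2" by (rule card_edges_through_le)
    finally show ?thesis unfolding A_def .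
  qed
qed

text \<open>The crossing of the drawing of \<open>G\<close> at \<open>p\<close>, if \<open>p\<close> is a crossing point at all
  (cf. \<open>crossing_eq_edges_through\<close>).\<close>
definition base_crossing :: "complex \<Rightarrow> 'v set set \<times> complex" where
  "base_crossing p = ({g \<in> E. p \<in> interior_pts (curve g)}, p)"

lemma base_crossing:
  assumes "x \<in> crossings EH path_curve"
  shows "base_crossing (snd x) \<in> crossings E curve"
    and "fst (base_crossing (snd x)) \<subseteq> (\<Union>e\<in>fst x. path_edges (P e))"
proof -
  obtain e f where ef: "fst x = {e, f}" "e \<in> EH" "f \<in> EH" "e \<noteq> f"
    and p: "snd x \<in> interior_pts (path_curve e)" "snd x \<in> interior_pts (path_curve f)"
    using assms crossings_iff[of "fst x" "snd x" EH path_curve] by auto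
  have on_curves: "snd x \<in> path_image (path_curve e)" "snd x \<in> path_image (path_curve f)"
    using p unfolding interior_pts_def by auto
  have off_vertices: "snd x \<notin> pos ` V"
    using path_curves_meet_off_vertices[OF ef(2-4) p(1) on_curves(2)] .
  obtain g1 where g1: "g1 \<in> path_edges (P e)" "snd x \<in> interior_pts (curve g1)"
    by (rule path_curve_non_vertex[OF ef(2) on_curves(1) off_vertices])
  obtain g2 where g2: "g2 \<in> path_edges (P f)" "snd x \<in> interior_pts (curve g2)"
    by (rule path_curve_non_vertex[OF ef(3) on_curves(2) off_vertices])
  have "g1 \<noteq> g2"
    using path_edges_disjoint[OF ef(2-4)] g1(1) g2(1) by blast
  then have cross: "({g1, g2}, snd x) \<in> crossings E curve"
    unfolding crossings_iff using g1 g2 path_edges_subset ef(2,3) by blast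
  then have "base_crossing (snd x) = ({g1, g2}, snd x)"
    unfolding base_crossing_def
    using crossing_eq_edges_through[OF finite_E card_edges_through_le cross] by simp
  then show "base_crossing (snd x) \<in> crossings E curve"
    and "fst (base_crossing (snd x)) \<subseteq> (\<Union>e\<in>fst x. path_edges (P e))"
    using cross g1(1) g2(1) ef(1) by auto
qed

lemma finite_crossings_path_curves: "finite (crossings EH path_curve)"
proof -
  have "snd ` crossings EH path_curve \<subseteq> snd ` crossings E curve"
  proof
    fix p assume "p \<in> snd ` crossings EH path_curve"
    then obtain x where "x \<in> crossings EH path_curve" "p = snd x" by blast
    then have "base_crossing p \<in> crossings E curve" using base_crossing(1) by blast
    then show "p \<in> snd ` crossings E curve"
      unfolding base_crossing_def by force
  qed
  then have "finite (snd ` crossings EH path_curve)"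
    using finite_crossings finite_subset by blast
  then show ?thesis
    using finite_imageD inj_on_snd_crossings[OF finite_EH card_path_curves_through_le] by blast
qed

lemma drawing_path_curves: "drawing VH EH (pos \<circ> branch) path_curve"
  unfolding drawing_def
proof (intro conjI ballI allI)
  show "inj_on (pos \<circ> branch) VH"
    using comp_inj_on[OF inj_branch inj_on_subset[OF inj_on_pos branch_subset]] .
  fix e assume "e \<in> EH"
  then show "arc (path_curve e)"
    and "{pathstart (path_curve e), pathfinish (path_curve e)} = (pos \<circ> branch) ` e"
    and "path_image (path_curve e) \<inter> (pos \<circ> branch) ` VH = (pos \<circ> branch) ` e"
    using path_curve ends_path_curve path_image_path_curve_inter_branch by simp_all
qed (simp_all add: finite_crossings_path_curves card_path_curves_through_le)

lemma card_charged_path_crossings_le: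
  assumes charge_le: "\<And>g. g \<in> E \<Longrightarrow> card {y \<in> crossings E curve. charge y = g} \<le> k"
    and charge_path: "\<And>x. x \<in> crossings EH path_curve \<Longrightarrow>
      charge (base_crossing (snd x)) \<in> path_edges (P (charge_H x))"
    and "e \<in> EH"
  shows "card {x \<in> crossings EH path_curve. charge_H x = e} \<le> (c + 1) * k"
proof -
  define X where "X = {x \<in> crossings EH path_curve. charge_H x = e}"
  define U where "U = (\<Union>g\<in>path_edges (P e). {y \<in> crossings E curve. charge y = g})"
  have "inj_on snd X"
    by (rule inj_on_subset[OF inj_on_snd_crossings[OF finite_EH card_path_curves_through_le]])
      (auto simp: X_def)
  moreover have "inj base_crossing"
    by (rule injI) (simp add: base_crossing_def)
  ultimately have "inj_on (base_crossing \<circ> snd) X"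
    by (simp add: comp_inj_on inj_on_subset)
  moreover have "(base_crossing \<circ> snd) ` X \<subseteq> U"
  proof
    fix y assume "y \<in> (base_crossing \<circ> snd) ` X"
    then obtain x where x: "x \<in> crossings EH path_curve" "charge_H x = e" "y = base_crossing (snd x)"
      unfolding X_def by auto
    then show "y \<in> U"
      using base_crossing(1)[OF x(1)] charge_path[OF x(1)] unfolding U_def by auto
  qed
  moreover have "finite U"
    unfolding U_def using finite_crossings by (rule rev_finite_subset) blast
  ultimately have "card X \<le> card U"
    by (rule card_inj_on_le)
  also have "\<dots> \<le> (\<Sum>g\<in>path_edges (P e). card {y \<in> crossings E curve. charge y = g})"
    unfolding U_def by (rule card_UN_le[OF finite_path_edges])
  also have "\<dots> \<le> card (path_edges (P e)) * k"
    using sum_bounded_above[of "path_edges (P e)" "\<lambda>g. card {y \<in> crossings E curve. charge y = g}" k]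
      charge_le path_edges_subset[OF \<open>e \<in> EH\<close>]
    by auto
  also have "\<dots> \<le> (c + 1) * k"
    using card_path_edges_path[OF \<open>e \<in> EH\<close>] by (rule mult_right_mono) simp
  finally show ?thesis unfolding X_def .
qed

lemma gap_planar_drawing_path_curves:
  assumes "gap_planar_drawing k V E pos curve"
  shows "gap_planar_drawing ((c + 1) * k) VH EH (pos \<circ> branch) path_curve"
proof -
  obtain charge where charge_in: "\<And>y. y \<in> crossings E curve \<Longrightarrow> charge y \<in> fst y"
    and charge_le: "\<And>g. g \<in> E \<Longrightarrow> card {y \<in> crossings E curve. charge y = g} \<le> k"
    using assms unfolding gap_planar_drawing_def by blast
  define charge_H where
    "charge_H x = (SOME e. e \<in> fst x \<and> charge (base_crossing (snd x)) \<in> path_edges (P e))" for x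
  have charge_H: "charge_H x \<in> fst x \<and> charge (base_crossing (snd x)) \<in> path_edges (P (charge_H x))"
    if "x \<in> crossings EH path_curve" for x
  proof -
    have "charge (base_crossing (snd x)) \<in> (\<Union>e\<in>fst x. path_edges (P e))"
      using charge_in[OF base_crossing(1)[OF that]] base_crossing(2)[OF that] by blast
    then obtain e where "e \<in> fst x" "charge (base_crossing (snd x)) \<in> path_edges (P e)"
      by blast
    then show ?thesis
      unfolding charge_H_def by (rule someI[where x = e, OF conjI])
  qed
  show ?thesis
    unfolding gap_planar_drawing_def
  proof (intro conjI exI[of _ charge_H] ballI)
    show "drawing VH EH (pos \<circ> branch) path_curve"
      by (rule drawing_path_curves)
    show "charge_H x \<in> fst x" if "x \<in> crossings EH path_curve" for x
      using charge_H[OF that] by (rule conjunct1)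
    show "card {x \<in> crossings EH path_curve. charge_H x = e} \<le> (c + 1) * k" if "e \<in> EH" for e
      using charge_le charge_H by (rule card_charged_path_crossings_le[OF _ conjunct2 that])
  qed
qed

end

theorem lemma10:
  fixes k c :: nat
    and V V' :: "'v set" and E E' :: "'v set set"
    and VH :: "'w set" and EH :: "'w set set"
  assumes "graph V E"
    and "k_gap_planar k V E"
    and "subgraph V' E' V E"
    and "graph VH EH"
    and "subdivision_le c V' E' VH EH"
  shows "k_gap_planar ((c + 1) * k) VH EH"
proof -
  obtain pos curve where G: "gap_planar_drawing k V E pos curve"
    using assms(2) unfolding k_gap_planar_def by blast
  obtain branch P where H: "subdivision VH EH branch P c"
    and V': "V' = branch ` VH \<union> (\<Union>e\<in>EH. inner_vertices (P e))"
    and E': "E' = (\<Union>e\<in>EH. path_edges (P e))"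
    using subdivision_leE[OF assms(5,4)] .
  interpret subdivision_drawing VH EH branch P c V E pos curve
  proof (intro subdivision_drawing.intro subdivision_drawing_axioms.intro H)
    show "drawing V E pos curve"
      using G unfolding gap_planar_drawing_def by blast
    show "finite E"
      using assms(1) by (rule graph_finite_edges)
    show "branch ` VH \<union> (\<Union>e\<in>EH. inner_vertices (P e)) \<subseteq> V"
      and "(\<Union>e\<in>EH. path_edges (P e)) \<subseteq> E"
      using assms(3) unfolding V' E' subgraph_def by blast+
  qed
  show ?thesis
    unfolding k_gap_planar_def using gap_planar_drawing_path_curves[OF G] by blast
qed

end
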